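(* Let $S$ be a string of length $n$ and, for $1\le i\le n$, let $c_i$ be the center of the longest palindromic suffix of $S[1..i]$. Then the array $(\tilde b_1,\dots,\tilde b_n)$ with $\tilde b_i=2c_i-i$ is a counter array, i.e. $1\le \tilde b_i\le i$ for all $i$ and $\tilde b_{i+1}\ge \tilde b_i-1$ for all $1\le i<n$. Moreover, the map $(c_1,\dots,c_n)\mapsto(\tilde b_1,\dots,\tilde b_n)$ is injective.
   Context: The center of a substring $S[a..b]$ is $(a+b)/2$. A counter array of length $n$ is an integer array $(a_1,\dots,a_n)$ with $1\le a_i\le i$ for all $i$ and $a_{i+1}\ge a_i-1$ for all $1\le i<n$. *)

theory Defs
  imports Complex_Main
begin

text \<open>Strings are lists, positions are 1-based: S[a..b] is the substring
  from position a to position b (inclusive).\<close>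

definition substr :: "'a list \<Rightarrow> nat \<Rightarrow> nat \<Rightarrow> 'a list" where
  "substr S a b = take (b + 1 - a) (drop (a - 1) S)"

definition palindrome :: "'a list \<Rightarrow> bool" where
  "palindrome w \<longleftrightarrow> rev w = w"

text \<open>Start position of the longest palindromic suffix of S[1..i]
  (longest = smallest start position).\<close>
definition lps_start :: "'a list \<Rightarrow> nat \<Rightarrow> nat" where
  "lps_start S i = (LEAST a. 1 \<le> a \<and> a \<le> i \<and> palindrome (substr S a i))"

definition center :: "nat \<Rightarrow> nat \<Rightarrow> real" where
  "center a b = (real a + real b) / 2"

definition lps_center :: "'a list \<Rightarrow> nat \<Rightarrow> real" where
  "lps_center S i = center (lps_start S i) i"

definition center_array :: "'a list \<Rightarrow> real list" where
  "center_array S = map (lps_center S) [1..<length S + 1]"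

definition to_btilde :: "real list \<Rightarrow> real list" where
  "to_btilde cs = map (\<lambda>i. 2 * cs ! (i - 1) - real i) [1..<length cs + 1]"

definition counter_array :: "int list \<Rightarrow> bool" where
  "counter_array a \<longleftrightarrow>
     (\<forall>i. 1 \<le> i \<and> i \<le> length a \<longrightarrow> 1 \<le> a ! (i - 1) \<and> a ! (i - 1) \<le> int i) \<and>
     (\<forall>i. 1 \<le> i \<and> i < length a \<longrightarrow> a ! i \<ge> a ! (i - 1) - 1)"

end

theory Submission
  imports Defs
begin

text \<open>Since 2 c_i - i is the start of the longest palindromic suffix of S[1..i], the
  first bounds are immediate, and the step condition holds because stripping the outer
  letters of a palindromic suffix of S[1..i+1] leaves a palindromic suffix of S[1..i].
  Injectivity holds for the map on all real lists, being affine in each entry.\<close>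

lemma palindrome_butlast_tl:
  assumes "palindrome w"
  shows "palindrome (butlast (tl w))"
proof -
  have "rev (butlast (tl w)) = tl (rev (tl w))"
    by (metis butlast_rev rev_rev_ident)
  also have "\<dots> = butlast (tl (rev w))"
    by (metis butlast_rev butlast_tl)
  finally show ?thesis using assms unfolding palindrome_def by simp
qed

lemma butlast_tl_substr:
  assumes "1 \<le> a" "b \<le> length S"
  shows "butlast (tl (substr S a b)) = substr S (Suc a) (b - 1)"
proof -
  obtain a' where "a = Suc a'" using assms(1) by (cases a) auto
  then have "tl (drop (a - 1) S) = drop a S" by (simp add: drop_Suc tl_drop)
  then show ?thesis
    using assms unfolding substr_def by (simp add: butlast_take tl_take)
qed

lemma palindrome_substr_same: "palindrome (substr S i i)"
  unfolding substr_def palindrome_def by (cases "drop (i - 1) S") auto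

lemma lps_start:
  assumes "1 \<le> i"
  shows "1 \<le> lps_start S i \<and> lps_start S i \<le> i \<and> palindrome (substr S (lps_start S i) i)"
  unfolding lps_start_def
  by (rule LeastI[of _ i]) (use assms palindrome_substr_same in auto)

lemma lps_start_le:
  "1 \<le> a \<Longrightarrow> a \<le> i \<Longrightarrow> palindrome (substr S a i) \<Longrightarrow> lps_start S i \<le> a"
  unfolding lps_start_def by (rule Least_le) simp

lemma lps_start_le_Suc:
  assumes "1 \<le> i" "Suc i \<le> length S"
  shows "lps_start S i \<le> lps_start S (Suc i) + 1"
proof -
  define a where "a = lps_start S (Suc i)"
  have a: "1 \<le> a" "palindrome (substr S a (Suc i))"
    using lps_start[of "Suc i" S] unfolding a_def by auto
  show ?thesis
  proof (cases "Suc a \<le> i")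
    case True
    have "palindrome (substr S (Suc a) i)"
      using palindrome_butlast_tl[OF a(2)] butlast_tl_substr[OF a(1) assms(2)] by simp
    then show ?thesis
      using lps_start_le[of "Suc a" i S] True unfolding a_def by simp
  next
    case False
    then show ?thesis using lps_start[OF assms(1), of S] unfolding a_def by simp
  qed
qed

definition lps_starts :: "'a list \<Rightarrow> int list" where
  "lps_starts S = map (\<lambda>i. int (lps_start S i)) [1..<length S + 1]"

lemma length_lps_starts [simp]: "length (lps_starts S) = length S"
  unfolding lps_starts_def by (simp del: upt_Suc)

lemma nth_lps_starts:
  "1 \<le> i \<Longrightarrow> i \<le> length S \<Longrightarrow> lps_starts S ! (i - 1) = int (lps_start S i)"
  unfolding lps_starts_def by (cases i) (simp_all del: upt_Suc)

lemma to_btilde_center_array: "to_btilde (center_array S) = map real_of_int (lps_starts S)"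
proof (rule nth_equalityI)
  fix k assume "k < length (to_btilde (center_array S))"
  then show "to_btilde (center_array S) ! k = map real_of_int (lps_starts S) ! k"
    using nth_lps_starts[of "Suc k" S]
    by (simp del: upt_Suc add: to_btilde_def center_array_def lps_center_def center_def
        field_simps)
qed (simp del: upt_Suc add: to_btilde_def center_array_def)

lemma counter_array_lps_starts: "counter_array (lps_starts S)"
  unfolding counter_array_def
proof (intro conjI allI impI)
  fix i assume "1 \<le> i \<and> i \<le> length (lps_starts S)"
  then show "1 \<le> lps_starts S ! (i - 1)" "lps_starts S ! (i - 1) \<le> int i"
    using lps_start[of i S] nth_lps_starts[of i S] by auto
next
  fix i assume "1 \<le> i \<and> i < length (lps_starts S)"
  then show "lps_starts S ! (i - 1) - 1 \<le> lps_starts S ! i"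
    using lps_start_le_Suc[of i S] nth_lps_starts[of i S] nth_lps_starts[of "Suc i" S] by simp
qed

lemma inj_to_btilde: "inj to_btilde"
proof (rule injI)
  fix x y :: "real list"
  assume eq: "to_btilde x = to_btilde y"
  then have "length x = length y"
    by (metis length_map diff_add_inverse2 length_upt to_btilde_def)
  moreover have "x ! k = y ! k" if "k < length x" for k
    using arg_cong[OF eq, of "\<lambda>l. l ! k"] that \<open>length x = length y\<close>
    by (simp del: upt_Suc add: to_btilde_def)
  ultimately show "x = y" by (rule nth_equalityI)
qed

theorem lemma3p5:
  fixes S :: "'a list" and n :: nat
  assumes "length S = n"
  shows "(\<exists>b :: int list. map real_of_int b = to_btilde (center_array S) \<and> counter_array b)
         \<and> inj_on to_btilde {center_array T | T :: 'a list. length T = n}"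
proof
  show "\<exists>b. map real_of_int b = to_btilde (center_array S) \<and> counter_array b"
    using to_btilde_center_array counter_array_lps_starts by metis
  show "inj_on to_btilde {center_array T | T :: 'a list. length T = n}"
    using inj_to_btilde by (rule inj_on_subset) simp
qed

end
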